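(* Let $L>0$, let $P\in H^2(0,L)$ be real-valued with $P(x)\ge P^0>0$ on $[0,L]$, and let $\theta_1,\dots,\theta_4\in\mathbb R$ with $\theta_3\neq0$. Let $\mathcal H=\{(w,v,\xi,\psi): w\in H^2(0,L),\ v\in H^1(0,L),\ \xi=v(L),\ \psi=v(0)\}$, $F[w,v]=\theta_1v(0)+\theta_2v'(0)+\theta_3w(0)+\theta_4w'(0)$, and let $A(w,v,\xi,\psi)=(v,(Pw')',-w'(L),F[w,v])$ with domain $$D(A)=\{(w,v,\xi,\psi): w\in H^3(0,L),\ v\in H^2(0,L),\ \xi=v(L),\ \psi=v(0),\ (Pw')'(L)=-w'(L),\ (Pw')'(0)=F[w,v]\}.$$ Then $A$ is injective and $\operatorname{ran}A=\mathcal H$; i.e. $A^{-1}$ exists and is defined on all of $\mathcal H$.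
   Context: Prime denotes $d/dx$; functions are complex-valued; $\mathcal H$ is a closed subspace of $H^2(0,L)\times H^1(0,L)\times\mathbb C\times\mathbb C$. *)

theory Defs
  imports "HOL-Analysis.Analysis"
begin

definition L2on :: "real \<Rightarrow> (real \<Rightarrow> complex) \<Rightarrow> bool" where
  "L2on L f \<longleftrightarrow> f absolutely_integrable_on {0..L} \<and>
                 (\<lambda>x. (norm (f x))^2) integrable_on {0..L}"

text \<open>Sobolev space H^k(0,L), via (continuous) representatives on [0,L]:
  H^0 = L^2, and f is in H^(k+1) iff f(x) = f(0) + integral of g over [0,x]
  for all x in [0,L], for some g in H^k (g is the weak derivative).\<close>
fun sob :: "nat \<Rightarrow> real \<Rightarrow> (real \<Rightarrow> complex) \<Rightarrow> bool" where
  "sob 0 L f = L2on L f"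
| "sob (Suc k) L f = (\<exists>g. sob k L g \<and> (\<forall>x\<in>{0..L}. f x = f 0 + integral {0..x} g))"

definition dI :: "real \<Rightarrow> (real \<Rightarrow> complex) \<Rightarrow> real \<Rightarrow> complex" where
  "dI L f x = vector_derivative f (at x within {0..L})"

text \<open>Functions are normalised to vanish outside [0,L], so that elements of the
  spaces are identified with their restriction to [0,L].\<close>
definition extI :: "real \<Rightarrow> (real \<Rightarrow> complex) \<Rightarrow> bool" where
  "extI L f \<longleftrightarrow> (\<forall>x. x \<notin> {0..L} \<longrightarrow> f x = 0)"

type_synonym state = "(real \<Rightarrow> complex) \<times> (real \<Rightarrow> complex) \<times> complex \<times> complex"

definition Hsp :: "real \<Rightarrow> state set" where
  "Hsp L = {(w, v, \<xi>, \<psi>). sob 2 L w \<and> sob 1 L v \<and> extI L w \<and> extI L v \<and>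
                          \<xi> = v L \<and> \<psi> = v 0}"

definition Fb :: "real \<Rightarrow> real \<Rightarrow> real \<Rightarrow> real \<Rightarrow> real \<Rightarrow>
                  (real \<Rightarrow> complex) \<Rightarrow> (real \<Rightarrow> complex) \<Rightarrow> complex" where
  "Fb L t1 t2 t3 t4 w v = of_real t1 * v 0 + of_real t2 * dI L v 0
                         + of_real t3 * w 0 + of_real t4 * dI L w 0"

definition flux' :: "real \<Rightarrow> (real \<Rightarrow> real) \<Rightarrow> (real \<Rightarrow> complex) \<Rightarrow> real \<Rightarrow> complex" where
  "flux' L P w = dI L (\<lambda>y. of_real (P y) * dI L w y)"

definition opA :: "real \<Rightarrow> (real \<Rightarrow> real) \<Rightarrow> real \<Rightarrow> real \<Rightarrow> real \<Rightarrow> real \<Rightarrow> state \<Rightarrow> state" where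
  "opA L P t1 t2 t3 t4 u = (case u of (w, v, \<xi>, \<psi>) \<Rightarrow>
     (v, (\<lambda>x. if x \<in> {0..L} then flux' L P w x else 0),
      - dI L w L, Fb L t1 t2 t3 t4 w v))"

definition domA :: "real \<Rightarrow> (real \<Rightarrow> real) \<Rightarrow> real \<Rightarrow> real \<Rightarrow> real \<Rightarrow> real \<Rightarrow> state set" where
  "domA L P t1 t2 t3 t4 = {(w, v, \<xi>, \<psi>). sob 3 L w \<and> sob 2 L v \<and> extI L w \<and> extI L v \<and>
       \<xi> = v L \<and> \<psi> = v 0 \<and>
       flux' L P w L = - dI L w L \<and> flux' L P w 0 = Fb L t1 t2 t3 t4 w v}"

end

theory Submission
  imports Defs
begin

text \<open>
  The inverse of \<open>A\<close> can be written down. If \<open>A(w, v, \<xi>, \<psi>) = (f, g, g(L), g(0))\<close> then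
  \<open>v = f\<close> and \<open>(P w')' = g\<close>, so \<open>P w' = c + \<integral>\<^sub>0\<^sup>x g\<close>; the condition \<open>(P w')'(L) = -w'(L)\<close>
  fixes \<open>c\<close>, and the condition \<open>(P w')'(0) = F[w, v]\<close> then fixes \<open>w(0)\<close> because \<open>\<theta>\<^sub>3 \<noteq> 0\<close>.
  Read as a uniqueness statement this gives injectivity, read as a construction it gives
  surjectivity. The analytic content is regularity: the flux of \<open>w \<in> H\<^sup>3\<close> lies in \<open>H\<^sup>1\<close>
  and the constructed \<open>w\<close> lies in \<open>H\<^sup>3\<close>. Both reduce to the product rule for an \<open>H\<^sup>1\<close>
  function times a \<open>C\<^sup>1\<close> function, which follows from Fubini's theorem on a triangle.
\<close>

section \<open>Integration by parts for absolutely continuous functions\<close>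

lemma sigma_finite_lebesgue: "sigma_finite_measure (lebesgue :: real measure)"
proof
  obtain A :: "real set set" where "countable A" "A \<subseteq> sets lborel" "\<Union>A = space lborel"
      "\<forall>a\<in>A. emeasure lborel a \<noteq> \<infinity>"
    using lborel.sigma_finite_countable by blast
  then show "\<exists>A::real set set. countable A \<and> A \<subseteq> sets lebesgue \<and> \<Union>A = space lebesgue \<and>
      (\<forall>a\<in>A. emeasure lebesgue a \<noteq> \<infinity>)"
    by (intro exI[of _ A]) (auto simp: emeasure_completion dest: sets_completionI_sets)
qed

interpretation lebesgue_pair: pair_sigma_finite "lebesgue :: real measure" "lebesgue :: real measure"
  by (simp add: pair_sigma_finite_def sigma_finite_lebesgue)

lemma (in pair_sigma_finite) integrable_product:
  fixes f :: "'a \<Rightarrow> real" and g :: "'b \<Rightarrow> real"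
  assumes f: "integrable M1 f" and g: "integrable M2 g"
  shows "integrable (M1 \<Otimes>\<^sub>M M2) (\<lambda>(x, y). f x * g y)"
proof (rule Fubini_integrable)
  show "(\<lambda>(x, y). f x * g y) \<in> borel_measurable (M1 \<Otimes>\<^sub>M M2)"
    using f g by measurable
  have "integrable M1 (\<lambda>x. norm (f x) * (LINT y|M2. norm (g y)))"
    using f by (intro integrable_mult_left) auto
  then show "integrable M1 (\<lambda>x. LINT y|M2. norm (case (x, y) of (x, y) \<Rightarrow> f x * g y))"
    by (simp add: abs_mult integral_mult_right_zero)
  show "AE x in M1. integrable M2 (\<lambda>y. case (x, y) of (x, y) \<Rightarrow> f x * g y)"
    using g by (auto intro!: integrable_mult_right)
qed

lemma sets_lebesgue_pair_le: "{z::real \<times> real. fst z \<le> snd z} \<in> sets (lebesgue \<Otimes>\<^sub>M lebesgue)"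
proof -
  have id: "(\<lambda>x::real. x) \<in> borel_measurable lebesgue"
    by (simp add: measurable_completion)
  have fst: "(fst :: real \<times> real \<Rightarrow> real) \<in> borel_measurable (lebesgue \<Otimes>\<^sub>M lebesgue)"
    using measurable_compose[OF measurable_fst[of lebesgue lebesgue] id] by simp
  have snd: "(snd :: real \<times> real \<Rightarrow> real) \<in> borel_measurable (lebesgue \<Otimes>\<^sub>M lebesgue)"
    using measurable_compose[OF measurable_snd[of lebesgue lebesgue] id] by simp
  show ?thesis
    using borel_measurable_le[OF fst snd] by (simp add: space_pair_measure)
qed

lemma integrable_lebesgue_pair_triangle:
  fixes Q R :: "real \<Rightarrow> complex"
  assumes Q: "integrable lebesgue Q" and R: "integrable lebesgue R"
  shows "integrable (lebesgue \<Otimes>\<^sub>M lebesgue) (\<lambda>(t, s). if t \<le> s then Q t * R s else 0)"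
proof -
  have "(\<lambda>z. if z \<in> {z. fst z \<le> snd z} then Q (fst z) * R (snd z) else 0)
      \<in> borel_measurable (lebesgue \<Otimes>\<^sub>M lebesgue)"
    using Q R sets_lebesgue_pair_le by (intro measurable_If_set) (measurable, auto)
  then have meas: "(\<lambda>(t, s). if t \<le> s then Q t * R s else 0) \<in> borel_measurable (lebesgue \<Otimes>\<^sub>M lebesgue)"
    by (simp add: split_beta')
  have "integrable (lebesgue \<Otimes>\<^sub>M lebesgue) (\<lambda>(t, s). norm (Q t) * norm (R s))"
    using Q R by (intro lebesgue_pair.integrable_product) auto
  then show ?thesis
    by (rule Bochner_Integration.integrable_bound[OF _ meas]) (auto simp: norm_mult)
qed

(* Both sides are the integral of q t * p s over the triangle a \<le> t \<le> s \<le> b. *)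
lemma integral_triangle_swap:
  fixes q p :: "real \<Rightarrow> complex"
  assumes q: "q absolutely_integrable_on {a..b}" and p: "p absolutely_integrable_on {a..b}"
  shows "integral {a..b} (\<lambda>t. q t * integral {t..b} p) = integral {a..b} (\<lambda>s. p s * integral {a..s} q)"
    and "(\<lambda>t. q t * integral {t..b} p) integrable_on {a..b}"
    and "(\<lambda>s. p s * integral {a..s} q) integrable_on {a..b}"
proof -
  define Q where "Q t = indicator {a..b} t *\<^sub>R q t" for t
  define R where "R s = indicator {a..b} s *\<^sub>R p s" for s
  define F where "F = (\<lambda>(t::real, s::real). if t \<le> s then Q t * R s else 0)"
  have Qi: "integrable lebesgue Q" and Ri: "integrable lebesgue R"
    using q p unfolding Q_def R_def set_integrable_def by auto
  have Fi: "integrable (lebesgue \<Otimes>\<^sub>M lebesgue) F"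
    unfolding F_def using Qi Ri by (rule integrable_lebesgue_pair_triangle)
  have inner_snd: "(LINT s|lebesgue. F (t, s)) = indicator {a..b} t *\<^sub>R (q t * integral {t..b} p)" for t
  proof (cases "t \<in> {a..b}")
    case True
    have eq: "(\<lambda>s. F (t, s)) = (\<lambda>s. q t * (indicator {t..b} s *\<^sub>R p s))"
      using True by (auto simp: F_def Q_def R_def indicator_def)
    have "p absolutely_integrable_on {t..b}"
      by (rule set_integrable_subset[OF p]) (use True in auto)
    then have "(LINT s|lebesgue. F (t, s)) = q t * integral {t..b} p"
      unfolding eq integral_mult_right_zero
      by (simp add: set_lebesgue_integral_eq_integral(2) flip: set_lebesgue_integral_def)
    with True show ?thesis by simp
  next
    case False
    then have "(\<lambda>s. F (t, s)) = (\<lambda>s. 0)" by (auto simp: F_def Q_def)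
    with False show ?thesis by simp
  qed
  have inner_fst: "(LINT t|lebesgue. F (t, s)) = indicator {a..b} s *\<^sub>R (p s * integral {a..s} q)" for s
  proof (cases "s \<in> {a..b}")
    case True
    have eq: "(\<lambda>t. F (t, s)) = (\<lambda>t. p s * (indicator {a..s} t *\<^sub>R q t))"
      using True by (auto simp: F_def Q_def R_def indicator_def)
    have "q absolutely_integrable_on {a..s}"
      by (rule set_integrable_subset[OF q]) (use True in auto)
    then have "(LINT t|lebesgue. F (t, s)) = p s * integral {a..s} q"
      unfolding eq integral_mult_right_zero
      by (simp add: set_lebesgue_integral_eq_integral(2) flip: set_lebesgue_integral_def)
    with True show ?thesis by simp
  next
    case False
    then have "(\<lambda>t. F (t, s)) = (\<lambda>t. 0)" by (auto simp: F_def R_def)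
    with False show ?thesis by simp
  qed
  have s1: "set_integrable lebesgue {a..b} (\<lambda>t. q t * integral {t..b} p)"
    using lebesgue_pair.integrable_fst'[OF Fi] unfolding inner_snd set_integrable_def .
  have s2: "set_integrable lebesgue {a..b} (\<lambda>s. p s * integral {a..s} q)"
    using lebesgue_pair.integrable_snd[of "\<lambda>t s. F (t, s)"] Fi
    unfolding inner_fst set_integrable_def by simp
  have "integral {a..b} (\<lambda>t. q t * integral {t..b} p) = (LINT t|lebesgue. LINT s|lebesgue. F (t, s))"
    using set_lebesgue_integral_eq_integral(2)[OF s1] by (simp add: inner_snd set_lebesgue_integral_def)
  also have "\<dots> = (LINT s|lebesgue. LINT t|lebesgue. F (t, s))"
    using lebesgue_pair.Fubini_integral[of "\<lambda>t s. F (t, s)"] Fi by simp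
  also have "\<dots> = integral {a..b} (\<lambda>s. p s * integral {a..s} q)"
    using set_lebesgue_integral_eq_integral(2)[OF s2] by (simp add: inner_fst set_lebesgue_integral_def)
  finally show "integral {a..b} (\<lambda>t. q t * integral {t..b} p) = integral {a..b} (\<lambda>s. p s * integral {a..s} q)" .
  show "(\<lambda>t. q t * integral {t..b} p) integrable_on {a..b}"
    using set_lebesgue_integral_eq_integral(1)[OF s1] .
  show "(\<lambda>s. p s * integral {a..s} q) integrable_on {a..b}"
    using set_lebesgue_integral_eq_integral(1)[OF s2] .
qed

(* Substituting f t = f b - \<integral>\<^sub>t\<^sup>b f' and u s = u a + \<integral>\<^sub>a\<^sup>s q, the two iterated integrals
   that appear coincide by integral_triangle_swap. *)
lemma has_integral_product_primitive:
  fixes u q f f' :: "real \<Rightarrow> complex"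
  assumes "a \<le> b" and q: "q absolutely_integrable_on {a..b}"
    and u: "\<forall>x\<in>{a..b}. u x = u a + integral {a..x} q"
    and f: "\<forall>x\<in>{a..b}. (f has_vector_derivative f' x) (at x within {a..b})"
    and f': "continuous_on {a..b} f'"
  shows "((\<lambda>t. q t * f t + u t * f' t) has_integral (u b * f b - u a * f a)) {a..b}"
proof -
  note swap = integral_triangle_swap[OF q absolutely_integrable_continuous_real[OF f']]
  have f_eq: "f t = f b - integral {t..b} f'" if "t \<in> {a..b}" for t
  proof -
    have "(f has_vector_derivative f' y) (at y within {t..b})" if "y \<in> {t..b}" for y
      using f \<open>t \<in> {a..b}\<close> \<open>y \<in> {t..b}\<close>
        has_vector_derivative_within_subset[of f "f' y" y "{a..b}" "{t..b}"] by auto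
    then have "(f' has_integral f b - f t) {t..b}"
      using that by (intro fundamental_theorem_of_calculus) auto
    then show ?thesis by (simp add: integral_unique)
  qed
  have q_int: "q integrable_on {a..b}"
    using q set_lebesgue_integral_eq_integral(1) by blast
  have "((\<lambda>t. f b * q t - q t * integral {t..b} f') has_integral
      (f b * integral {a..b} q - integral {a..b} (\<lambda>t. q t * integral {t..b} f'))) {a..b}"
    by (intro has_integral_diff has_integral_mult_right integrable_integral q_int swap(2))
  then have qf: "((\<lambda>t. q t * f t) has_integral
      (f b * integral {a..b} q - integral {a..b} (\<lambda>t. q t * integral {t..b} f'))) {a..b}"
  proof (rule has_integral_eq[rotated])
    fix t assume "t \<in> {a..b}"
    then show "f b * q t - q t * integral {t..b} f' = q t * f t"
      by (subst f_eq) (simp_all add: algebra_simps)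
  qed
  have "((\<lambda>t. u a * f' t + f' t * integral {a..t} q) has_integral
      (u a * integral {a..b} f' + integral {a..b} (\<lambda>s. f' s * integral {a..s} q))) {a..b}"
    by (intro has_integral_add has_integral_mult_right integrable_integral swap(3)
        integrable_continuous_real f')
  then have uf': "((\<lambda>t. u t * f' t) has_integral
      (u a * integral {a..b} f' + integral {a..b} (\<lambda>s. f' s * integral {a..s} q))) {a..b}"
  proof (rule has_integral_eq[rotated])
    fix t assume "t \<in> {a..b}"
    then have "u t = u a + integral {a..t} q" using u by blast
    then show "u a * f' t + f' t * integral {a..t} q = u t * f' t"
      by (simp add: algebra_simps)
  qed
  have int_f': "integral {a..b} f' = f b - f a"
    using f_eq[of a] \<open>a \<le> b\<close> by simp
  have int_q: "integral {a..b} q = u b - u a"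
    using bspec[OF u, of b] \<open>a \<le> b\<close> by simp
  show ?thesis
    using has_integral_add[OF qf uf'] swap(1) unfolding int_f' int_q by (simp add: algebra_simps)
qed

section \<open>Primitives and continuously differentiable functions\<close>

definition primitive_on :: "real \<Rightarrow> (real \<Rightarrow> complex) \<Rightarrow> (real \<Rightarrow> complex) \<Rightarrow> bool" where
  "primitive_on L f g \<longleftrightarrow> (\<forall>x\<in>{0..L}. f x = f 0 + integral {0..x} g)"

definition C1_deriv_on :: "real \<Rightarrow> (real \<Rightarrow> complex) \<Rightarrow> (real \<Rightarrow> complex) \<Rightarrow> bool" where
  "C1_deriv_on L f f' \<longleftrightarrow>
     (\<forall>x\<in>{0..L}. (f has_vector_derivative f' x) (at x within {0..L})) \<and> continuous_on {0..L} f'"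

lemma primitive_onD: "primitive_on L f g \<Longrightarrow> x \<in> {0..L} \<Longrightarrow> f x = f 0 + integral {0..x} g"
  unfolding primitive_on_def by blast

lemma sob_Suc_iff: "sob (Suc k) L f \<longleftrightarrow> (\<exists>g. sob k L g \<and> primitive_on L f g)"
  by (simp add: primitive_on_def)

(* Unfolding sob (Suc k) would expose equations f x = f 0 + ... on which the simplifier loops. *)
declare sob.simps(2) [simp del]

lemma primitive_on_mult_C1:
  assumes q: "q absolutely_integrable_on {0..L}" and u: "primitive_on L u q"
    and p: "C1_deriv_on L p p'"
  shows "primitive_on L (\<lambda>x. u x * p x) (\<lambda>x. q x * p x + u x * p' x)"
  unfolding primitive_on_def
proof
  fix b assume b: "b \<in> {0..L}"
  then have sub: "{0..b} \<subseteq> {0..L}" by auto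
  have q_b: "q absolutely_integrable_on {0..b}"
    using set_integrable_subset[OF q _ sub] by simp
  have u_b: "\<forall>x\<in>{0..b}. u x = u 0 + integral {0..x} q"
    using u sub unfolding primitive_on_def by blast
  have p_b: "\<forall>x\<in>{0..b}. (p has_vector_derivative p' x) (at x within {0..b})"
  proof
    fix x assume "x \<in> {0..b}"
    then have "(p has_vector_derivative p' x) (at x within {0..L})"
      using p sub unfolding C1_deriv_on_def by blast
    then show "(p has_vector_derivative p' x) (at x within {0..b})"
      using has_vector_derivative_within_subset sub by blast
  qed
  have p'_b: "continuous_on {0..b} p'"
    using p continuous_on_subset[OF _ sub] unfolding C1_deriv_on_def by blast
  have "((\<lambda>t. q t * p t + u t * p' t) has_integral (u b * p b - u 0 * p 0)) {0..b}"
    using b by (intro has_integral_product_primitive q_b u_b p_b p'_b) simp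
  then show "u b * p b = u 0 * p 0 + integral {0..b} (\<lambda>x. q x * p x + u x * p' x)"
    by (simp add: integral_unique)
qed

lemma primitive_on_add:
  assumes "g1 integrable_on {0..L}" "g2 integrable_on {0..L}"
    and "primitive_on L f1 g1" "primitive_on L f2 g2"
  shows "primitive_on L (\<lambda>x. f1 x + f2 x) (\<lambda>x. g1 x + g2 x)"
  unfolding primitive_on_def
proof
  fix x assume x: "x \<in> {0..L}"
  then have sub: "{0..x} \<subseteq> {0..L}" by auto
  have "integral {0..x} (\<lambda>x. g1 x + g2 x) = integral {0..x} g1 + integral {0..x} g2"
    using integrable_on_subinterval[OF assms(1) sub] integrable_on_subinterval[OF assms(2) sub]
    by (rule integral_add)
  with primitive_onD[OF assms(3) x] primitive_onD[OF assms(4) x]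
  show "f1 x + f2 x = f1 0 + f2 0 + integral {0..x} (\<lambda>x. g1 x + g2 x)"
    by simp
qed

lemma primitive_on_continuous:
  assumes "g integrable_on {0..L}" "primitive_on L f g"
  shows "continuous_on {0..L} f"
proof -
  have "continuous_on {0..L} (\<lambda>x. f 0 + integral {0..x} g)"
    using indefinite_integral_continuous_1[OF assms(1)] by (rule continuous_on_add[OF continuous_on_const])
  then show ?thesis
    by (rule continuous_on_eq) (use primitive_onD[OF assms(2)] in metis)
qed

lemma C1_deriv_on_primitive:
  assumes "continuous_on {0..L} g" "primitive_on L f g"
  shows "C1_deriv_on L f g"
  unfolding C1_deriv_on_def
proof (intro conjI ballI assms(1))
  fix x assume x: "x \<in> {0..L}"
  have "((\<lambda>y. f 0 + integral {0..y} g) has_vector_derivative g x) (at x within {0..L})"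
    using has_vector_derivative_add_const[THEN iffD2, OF integral_has_vector_derivative[OF assms(1) x]]
    by (simp add: add.commute)
  then show "(f has_vector_derivative g x) (at x within {0..L})"
    by (rule has_vector_derivative_transform[OF x, rotated]) (use primitive_onD[OF assms(2)] in metis)
qed

lemma primitive_on_C1_deriv:
  assumes "C1_deriv_on L f f'"
  shows "primitive_on L f f'"
  unfolding primitive_on_def
proof
  fix x assume x: "x \<in> {0..L}"
  have "(f has_vector_derivative f' y) (at y within {0..x})" if "y \<in> {0..x}" for y
    using assms x that has_vector_derivative_within_subset[of f "f' y" y "{0..L}" "{0..x}"]
    by (auto simp: C1_deriv_on_def)
  then have "(f' has_integral f x - f 0) {0..x}"
    using x by (intro fundamental_theorem_of_calculus) auto
  then show "f x = f 0 + integral {0..x} f'" by (simp add: integral_unique)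
qed

lemma C1_deriv_on_continuous: "C1_deriv_on L f f' \<Longrightarrow> continuous_on {0..L} f"
  unfolding C1_deriv_on_def continuous_on_eq_continuous_within
  by (blast intro: has_vector_derivative_continuous)

lemma dI_eq_C1_deriv:
  assumes "0 < L" "C1_deriv_on L f f'" "x \<in> {0..L}"
  shows "dI L f x = f' x"
  using assms vector_derivative_within_cbox[OF assms(1), of x f "f' x"]
  by (simp add: dI_def C1_deriv_on_def)

lemma C1_deriv_on_cong:
  assumes "C1_deriv_on L f f'" "\<forall>x\<in>{0..L}. g x = f x" "\<forall>x\<in>{0..L}. g' x = f' x"
  shows "C1_deriv_on L g g'"
  unfolding C1_deriv_on_def
proof (intro conjI ballI)
  fix x assume x: "x \<in> {0..L}"
  have "(f has_vector_derivative f' x) (at x within {0..L})"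
    using assms(1) x by (simp add: C1_deriv_on_def)
  then have "(f has_vector_derivative g' x) (at x within {0..L})"
    using assms(3) x by simp
  then show "(g has_vector_derivative g' x) (at x within {0..L})"
    by (rule has_vector_derivative_transform[OF x, rotated]) (use assms(2) in blast)
next
  have "continuous_on {0..L} f'"
    using assms(1) by (simp add: C1_deriv_on_def)
  then show "continuous_on {0..L} g'"
    by (rule continuous_on_eq) (use assms(3) in auto)
qed

lemma C1_deriv_on_const: "C1_deriv_on L (\<lambda>x. c) (\<lambda>x. 0)"
  by (simp add: C1_deriv_on_def)

lemma C1_deriv_on_mult:
  assumes f: "C1_deriv_on L f f'" and g: "C1_deriv_on L g g'"
  shows "C1_deriv_on L (\<lambda>x. f x * g x) (\<lambda>x. f' x * g x + f x * g' x)"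
  unfolding C1_deriv_on_def
proof (intro conjI ballI)
  fix x assume "x \<in> {0..L}"
  then have "((\<lambda>x. f x * g x) has_vector_derivative f x * g' x + f' x * g x) (at x within {0..L})"
    using f g unfolding C1_deriv_on_def by (intro has_vector_derivative_mult) auto
  then show "((\<lambda>x. f x * g x) has_vector_derivative f' x * g x + f x * g' x) (at x within {0..L})"
    by (simp add: add.commute)
next
  show "continuous_on {0..L} (\<lambda>x. f' x * g x + f x * g' x)"
    using f g C1_deriv_on_continuous[OF f] C1_deriv_on_continuous[OF g]
    by (auto simp: C1_deriv_on_def intro!: continuous_intros)
qed

lemma C1_deriv_on_inverse:
  assumes f: "C1_deriv_on L f f'" and nz: "\<forall>x\<in>{0..L}. f x \<noteq> 0"
  shows "C1_deriv_on L (\<lambda>x. inverse (f x)) (\<lambda>x. - f' x * (inverse (f x))\<^sup>2)"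
  unfolding C1_deriv_on_def
proof (intro conjI ballI)
  fix x assume x: "x \<in> {0..L}"
  have "((inverse \<circ> f) has_vector_derivative f' x * - (inverse (f x) ^ Suc (Suc 0))) (at x within {0..L})"
  proof (rule field_vector_diff_chain_within)
    show "(f has_vector_derivative f' x) (at x within {0..L})"
      using f x unfolding C1_deriv_on_def by blast
    show "(inverse has_field_derivative - (inverse (f x) ^ Suc (Suc 0))) (at (f x) within f ` {0..L})"
      using nz x by (intro DERIV_inverse) blast
  qed
  then show "((\<lambda>x. inverse (f x)) has_vector_derivative - f' x * (inverse (f x))\<^sup>2) (at x within {0..L})"
    by (simp add: o_def power2_eq_square)
next
  show "continuous_on {0..L} (\<lambda>x. - f' x * (inverse (f x))\<^sup>2)"
    using f C1_deriv_on_continuous[OF f] nz by (auto simp: C1_deriv_on_def intro!: continuous_intros)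
qed

lemma C1_deriv_on_diff_const:
  assumes "C1_deriv_on L f f'" "C1_deriv_on L g g'" "\<forall>x\<in>{0..L}. f' x = g' x" "x \<in> {0..L}"
  shows "f x - g x = f 0 - g 0"
proof -
  have "integral {0..x} f' = integral {0..x} g'"
    using assms(3,4) by (intro integral_cong) auto
  with primitive_onD[OF primitive_on_C1_deriv[OF assms(1)] assms(4)]
    primitive_onD[OF primitive_on_C1_deriv[OF assms(2)] assms(4)]
  show ?thesis by simp
qed

section \<open>Square-integrable functions and Sobolev spaces\<close>

lemma L2on_imp_integrable: "L2on L f \<Longrightarrow> f integrable_on {0..L}"
  unfolding L2on_def using set_lebesgue_integral_eq_integral(1) by blast

lemma L2on_measurable: "L2on L f \<Longrightarrow> f \<in> borel_measurable (lebesgue_on {0..L})"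
  unfolding L2on_def using absolutely_integrable_measurable[of "{0..L}" f] by simp

lemma L2on_dominated:
  fixes f g1 g2 :: "real \<Rightarrow> complex"
  assumes f: "f \<in> borel_measurable (lebesgue_on {0..L})" and g1: "L2on L g1" and g2: "L2on L g2"
    and bound: "\<And>x. x \<in> {0..L} \<Longrightarrow> norm (f x) \<le> C * (norm (g1 x) + norm (g2 x))"
  shows "L2on L f"
proof -
  have "(\<lambda>x. norm (g1 x)) integrable_on {0..L}" "(\<lambda>x. norm (g2 x)) integrable_on {0..L}"
    using g1 g2 unfolding L2on_def absolutely_integrable_on_def by blast+
  then have "(\<lambda>x. C * (norm (g1 x) + norm (g2 x))) integrable_on {0..L}"
    by (intro integrable_on_mult_right integrable_add)
  then have "f absolutely_integrable_on {0..L}"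
    using f bound by (intro measurable_bounded_by_integrable_imp_absolutely_integrable) auto
  moreover have "(\<lambda>x. (norm (f x))\<^sup>2) integrable_on {0..L}"
  proof (rule measurable_bounded_by_integrable_imp_integrable_real)
    show "(\<lambda>x. (norm (f x))\<^sup>2) \<in> borel_measurable (lebesgue_on {0..L})"
      using f by measurable
    have "(\<lambda>x. (norm (g1 x))\<^sup>2) integrable_on {0..L}" "(\<lambda>x. (norm (g2 x))\<^sup>2) integrable_on {0..L}"
      using g1 g2 unfolding L2on_def by blast+
    then show "(\<lambda>x. 2 * C\<^sup>2 * ((norm (g1 x))\<^sup>2 + (norm (g2 x))\<^sup>2)) integrable_on {0..L}"
      by (intro integrable_on_mult_right integrable_add)
  next
    fix x assume "x \<in> {0..L}"
    then have "(norm (f x))\<^sup>2 \<le> (C * (norm (g1 x) + norm (g2 x)))\<^sup>2"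
      using bound by (intro power_mono) auto
    also have "\<dots> = C\<^sup>2 * (norm (g1 x) + norm (g2 x))\<^sup>2"
      by (simp add: power_mult_distrib)
    also have "\<dots> \<le> C\<^sup>2 * (2 * ((norm (g1 x))\<^sup>2 + (norm (g2 x))\<^sup>2))"
      using sum_squares_bound[of "norm (g1 x)" "norm (g2 x)"]
      by (intro mult_left_mono) (simp_all add: power2_sum)
    finally show "\<bar>(norm (f x))\<^sup>2\<bar> \<le> 2 * C\<^sup>2 * ((norm (g1 x))\<^sup>2 + (norm (g2 x))\<^sup>2)"
      by (simp add: algebra_simps)
  qed simp
  ultimately show ?thesis
    unfolding L2on_def by blast
qed

lemma L2on_add: "L2on L f \<Longrightarrow> L2on L g \<Longrightarrow> L2on L (\<lambda>x. f x + g x)"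
  by (rule L2on_dominated[of _ _ f g 1])
    (auto intro: borel_measurable_add L2on_measurable norm_triangle_ineq)

lemma L2on_mult_continuous:
  assumes q: "L2on L q" and p: "continuous_on {0..L} p"
  shows "L2on L (\<lambda>x. q x * p x)"
proof -
  obtain M where M: "\<forall>x\<in>{0..L}. norm (p x) \<le> M"
    using compact_imp_bounded[OF compact_continuous_image[OF p compact_Icc]]
    by (auto simp: bounded_iff)
  show ?thesis
  proof (rule L2on_dominated[OF _ q q, of _ M])
    show "(\<lambda>x. q x * p x) \<in> borel_measurable (lebesgue_on {0..L})"
      using L2on_measurable[OF q] continuous_imp_measurable_on_sets_lebesgue[OF p]
      by (auto intro: borel_measurable_times)
  next
    fix x assume "x \<in> {0..L}"
    have "norm (q x * p x) \<le> M * norm (q x)"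
      using M \<open>x \<in> {0..L}\<close> mult_right_mono[of "norm (p x)" M "norm (q x)"]
      by (simp add: norm_mult mult.commute)
    also have "\<dots> \<le> M * (norm (q x) + norm (q x))"
      using M \<open>x \<in> {0..L}\<close> by (intro mult_left_mono) (auto intro: order_trans[OF norm_ge_zero])
    finally show "norm (q x * p x) \<le> M * (norm (q x) + norm (q x))" .
  qed
qed

lemma continuous_on_imp_L2on: "continuous_on {0..L} f \<Longrightarrow> L2on L f"
  unfolding L2on_def
  by (auto intro!: absolutely_integrable_continuous_real integrable_continuous_real continuous_intros)

lemma L2on_cong: "L2on L f \<Longrightarrow> \<forall>x\<in>{0..L}. g x = f x \<Longrightarrow> L2on L g"
  unfolding L2on_def using set_integrable_cong[of lebesgue lebesgue "{0..L}" "{0..L}" f g]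
  by (auto elim!: integrable_eq)

lemma sob_imp_L2on: "sob k L f \<Longrightarrow> L2on L f"
proof (induction k arbitrary: f)
  case (Suc k)
  then obtain g where "sob k L g" "primitive_on L f g"
    by (auto simp: sob_Suc_iff)
  with Suc.IH have "continuous_on {0..L} f"
    by (intro primitive_on_continuous L2on_imp_integrable) auto
  then show ?case by (rule continuous_on_imp_L2on)
qed simp

lemma sob_cong: "sob k L f \<Longrightarrow> \<forall>x\<in>{0..L}. g x = f x \<Longrightarrow> sob k L g"
proof (cases k)
  case (Suc m)
  assume "sob k L f" and eq: "\<forall>x\<in>{0..L}. g x = f x"
  then obtain h where "sob m L h" "primitive_on L f h"
    using Suc by (auto simp: sob_Suc_iff)
  moreover have "primitive_on L g h"
    unfolding primitive_on_def
  proof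
    fix x assume "x \<in> {0..L}"
    with eq \<open>primitive_on L f h\<close> show "g x = g 0 + integral {0..x} h"
      using primitive_onD[of L f h x] by simp
  qed
  ultimately show ?thesis
    using Suc by (auto simp: sob_Suc_iff)
qed (auto intro: L2on_cong)

lemma sob_Suc_imp_continuous:
  assumes "sob (Suc k) L f"
  shows "continuous_on {0..L} f"
proof -
  obtain g where "sob k L g" "primitive_on L f g"
    using assms by (auto simp: sob_Suc_iff)
  then show ?thesis
    by (meson primitive_on_continuous L2on_imp_integrable sob_imp_L2on)
qed

lemma sob_Suc_Suc_imp_C1_deriv:
  assumes "sob (Suc (Suc k)) L f"
  obtains g where "C1_deriv_on L f g" "sob (Suc k) L g"
proof -
  obtain g where "sob (Suc k) L g" "primitive_on L f g"
    using assms by (auto simp: sob_Suc_iff)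
  then show ?thesis
    using that by (blast intro: C1_deriv_on_primitive sob_Suc_imp_continuous)
qed

lemma C1_deriv_on_imp_sob_Suc: "C1_deriv_on L f g \<Longrightarrow> sob k L g \<Longrightarrow> sob (Suc k) L f"
  using primitive_on_C1_deriv by (auto simp: sob_Suc_iff)

lemma sob_add: "sob k L f \<Longrightarrow> sob k L g \<Longrightarrow> sob k L (\<lambda>x. f x + g x)"
proof (induction k arbitrary: f g)
  case 0
  then show ?case by (simp add: L2on_add)
next
  case (Suc k)
  then obtain f' g' where f': "sob k L f'" "primitive_on L f f'" and g': "sob k L g'" "primitive_on L g g'"
    by (auto simp: sob_Suc_iff)
  have "primitive_on L (\<lambda>x. f x + g x) (\<lambda>x. f' x + g' x)"
    using f' g' by (intro primitive_on_add L2on_imp_integrable sob_imp_L2on)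
  with Suc.IH[OF f'(1) g'(1)] show ?case
    by (auto simp: sob_Suc_iff)
qed

lemma sob_one_mult_C1_deriv:
  assumes u: "sob 1 L u" and p: "C1_deriv_on L p p'"
  shows "sob 1 L (\<lambda>x. u x * p x)"
proof -
  obtain q where q: "L2on L q" "primitive_on L u q"
    using u by (auto simp: sob_Suc_iff)
  have "continuous_on {0..L} u"
    using q by (intro primitive_on_continuous L2on_imp_integrable)
  then have "L2on L (\<lambda>x. u x * p' x)"
    using p by (intro continuous_on_imp_L2on continuous_on_mult) (auto simp: C1_deriv_on_def)
  moreover have "L2on L (\<lambda>x. q x * p x)"
    using q(1) C1_deriv_on_continuous[OF p] by (rule L2on_mult_continuous)
  ultimately have "L2on L (\<lambda>x. q x * p x + u x * p' x)"
    by (simp add: L2on_add)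
  moreover have "primitive_on L (\<lambda>x. u x * p x) (\<lambda>x. q x * p x + u x * p' x)"
    using q p by (intro primitive_on_mult_C1) (auto simp: L2on_def)
  ultimately show ?thesis
    by (auto simp: sob_Suc_iff)
qed

lemma sob2_imp_C1_deriv:
  assumes "sob 2 L f"
  obtains g where "C1_deriv_on L f g" "sob 1 L g"
proof -
  have "sob (Suc (Suc 0)) L f"
    using assms by (simp only: numeral_2_eq_2)
  then obtain g where "C1_deriv_on L f g" "sob (Suc 0) L g"
    by (rule sob_Suc_Suc_imp_C1_deriv)
  with that[of g] show ?thesis
    by (simp only: One_nat_def)
qed

lemma sob3_imp_C1_deriv:
  assumes "sob 3 L f"
  obtains g where "C1_deriv_on L f g" "sob 2 L g"
proof -
  have "sob (Suc (Suc 1)) L f"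
    using assms by (simp only: numeral_3_eq_3 One_nat_def)
  then obtain g where "C1_deriv_on L f g" "sob (Suc 1) L g"
    by (rule sob_Suc_Suc_imp_C1_deriv)
  with that[of g] show ?thesis
    by (simp only: numeral_2_eq_2 One_nat_def)
qed

section \<open>The operator\<close>

lemma flux'_eq_C1_deriv:
  assumes "0 < L" "C1_deriv_on L w a" "C1_deriv_on L (\<lambda>y. complex_of_real (P y) * a y) D"
    and "x \<in> {0..L}"
  shows "flux' L P w x = D x"
proof -
  have "C1_deriv_on L (\<lambda>y. complex_of_real (P y) * dI L w y) D"
    by (rule C1_deriv_on_cong[OF assms(3)]) (simp_all add: dI_eq_C1_deriv[OF assms(1,2)])
  then show ?thesis
    unfolding flux'_def by (rule dI_eq_C1_deriv[OF assms(1) _ assms(4)])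
qed

lemma flux'_sob3:
  assumes "0 < L" and P: "C1_deriv_on L (\<lambda>x. complex_of_real (P x)) p" and w: "sob 3 L w"
  obtains a b where "C1_deriv_on L w a" "C1_deriv_on L a b" "sob 1 L b"
    "\<forall>x\<in>{0..L}. flux' L P w x = p x * a x + complex_of_real (P x) * b x"
proof -
  obtain a where a: "C1_deriv_on L w a" "sob 2 L a"
    using w by (rule sob3_imp_C1_deriv)
  obtain b where b: "C1_deriv_on L a b" "sob 1 L b"
    using a(2) by (rule sob2_imp_C1_deriv)
  have "\<forall>x\<in>{0..L}. flux' L P w x = p x * a x + complex_of_real (P x) * b x"
    using flux'_eq_C1_deriv[OF \<open>0 < L\<close> a(1) C1_deriv_on_mult[OF P b(1)]] by blast
  with a b that show ?thesis by blast
qed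

(* (K/P)' = g/P - p K/P\<^sup>2 with p = P'; the second summand is written as p times the C\<^sup>1
   function -K/P\<^sup>2, so that both summands are H\<^sup>1 by sob_one_mult_C1_deriv. *)
lemma sob2_primitive_div:
  assumes g: "sob 1 L g" and K: "primitive_on L K g"
    and P: "sob 2 L P" and P_nz: "\<forall>x\<in>{0..L}. P x \<noteq> 0"
  shows "sob 2 L (\<lambda>x. K x / P x)"
proof -
  obtain p where p: "C1_deriv_on L P p" "sob 1 L p"
    using P by (rule sob2_imp_C1_deriv)
  have "continuous_on {0..L} g"
    using g sob_Suc_imp_continuous[of 0] by (simp only: One_nat_def)
  then have K': "C1_deriv_on L K g"
    using K by (rule C1_deriv_on_primitive)
  define R where "R x = inverse (P x)" for x
  have R': "C1_deriv_on L R (\<lambda>x. - p x * (R x)\<^sup>2)"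
    unfolding R_def by (rule C1_deriv_on_inverse[OF p(1) P_nz])
  obtain T' where T': "C1_deriv_on L (\<lambda>x. K x * (R x * R x) * -1) T'"
    using C1_deriv_on_mult[OF C1_deriv_on_mult[OF K' C1_deriv_on_mult[OF R' R']] C1_deriv_on_const]
    by blast
  define H' where "H' x = g x * R x + p x * (K x * (R x * R x) * -1)" for x
  have "C1_deriv_on L (\<lambda>x. K x * R x) H'"
    using C1_deriv_on_mult[OF K' R'] by (rule C1_deriv_on_cong) (auto simp: H'_def power2_eq_square)
  moreover have "sob 1 L H'"
    unfolding H'_def
    using sob_one_mult_C1_deriv[OF g R'] sob_one_mult_C1_deriv[OF p(2) T'] by (rule sob_add)
  ultimately have "sob (Suc 1) L (\<lambda>x. K x * R x)"
    by (rule C1_deriv_on_imp_sob_Suc)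
  then show ?thesis
    by (simp only: R_def divide_inverse numeral_2_eq_2 One_nat_def)
qed

lemma inj_on_opA:
  assumes L: "0 < L" and P: "sob 2 L (\<lambda>x. complex_of_real (P x))"
    and P_nz: "\<forall>x\<in>{0..L}. P x \<noteq> 0" and t3: "t3 \<noteq> 0"
  shows "inj_on (opA L P t1 t2 t3 t4) (domA L P t1 t2 t3 t4)"
proof (rule inj_onI)
  fix u1 u2
  assume u1: "u1 \<in> domA L P t1 t2 t3 t4" and u2: "u2 \<in> domA L P t1 t2 t3 t4"
    and eq: "opA L P t1 t2 t3 t4 u1 = opA L P t1 t2 t3 t4 u2"
  obtain w1 v1 w2 v2 where u: "u1 = (w1, v1, v1 L, v1 0)" "u2 = (w2, v2, v2 L, v2 0)"
    and w1: "sob 3 L w1" "extI L w1" and w2: "sob 3 L w2" "extI L w2"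
    using u1 u2 by (auto simp: domA_def)
  have v: "v1 = v2" and d_L: "dI L w1 L = dI L w2 L"
    and F: "Fb L t1 t2 t3 t4 w1 v1 = Fb L t1 t2 t3 t4 w2 v2"
    and flux_ext: "(\<lambda>x. if x \<in> {0..L} then flux' L P w1 x else 0)
      = (\<lambda>x. if x \<in> {0..L} then flux' L P w2 x else 0)"
    using eq by (auto simp: u opA_def)
  have flux: "\<forall>x\<in>{0..L}. flux' L P w1 x = flux' L P w2 x"
    using fun_cong[OF flux_ext] by (metis (full_types))
  obtain p where p: "C1_deriv_on L (\<lambda>x. complex_of_real (P x)) p"
    using P by (rule sob2_imp_C1_deriv)
  obtain a1 b1 where a1: "C1_deriv_on L w1 a1" "C1_deriv_on L a1 b1"
    and flux1: "\<forall>x\<in>{0..L}. flux' L P w1 x = p x * a1 x + complex_of_real (P x) * b1 x"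
    using flux'_sob3[OF L p w1(1)] by blast
  obtain a2 b2 where a2: "C1_deriv_on L w2 a2" "C1_deriv_on L a2 b2"
    and flux2: "\<forall>x\<in>{0..L}. flux' L P w2 x = p x * a2 x + complex_of_real (P x) * b2 x"
    using flux'_sob3[OF L p w2(1)] by blast
  have L_in: "L \<in> {0..L}" and O_in: "0 \<in> {0..L}"
    using L by auto
  have a: "a1 x = a2 x" if "x \<in> {0..L}" for x
  proof -
    \<comment> \<open>\<open>P a\<^sub>1\<close> and \<open>P a\<^sub>2\<close> have the same derivative and agree at \<open>L\<close>.\<close>
    note const = C1_deriv_on_diff_const[OF C1_deriv_on_mult[OF p a1(2)] C1_deriv_on_mult[OF p a2(2)]]
    have "a1 L = a2 L"
      using d_L dI_eq_C1_deriv[OF L a1(1) L_in] dI_eq_C1_deriv[OF L a2(1) L_in] by simp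
    with const[of x] const[of L] flux flux1 flux2 that L_in
    have "complex_of_real (P x) * a1 x = complex_of_real (P x) * a2 x"
      by auto
    with P_nz that show ?thesis by simp
  qed
  have "w1 0 = w2 0"
    using F t3 a[OF O_in] dI_eq_C1_deriv[OF L a1(1) O_in] dI_eq_C1_deriv[OF L a2(1) O_in]
    by (simp add: Fb_def v)
  then have "w1 x = w2 x" for x
    using C1_deriv_on_diff_const[OF a1(1) a2(1)] a w1(2) w2(2)
    by (cases "x \<in> {0..L}") (auto simp: extI_def)
  then show "u1 = u2"
    using u v by auto
qed

lemma opA_image_subset_Hsp:
  assumes L: "0 < L" and P: "sob 2 L (\<lambda>x. complex_of_real (P x))"
  shows "opA L P t1 t2 t3 t4 ` domA L P t1 t2 t3 t4 \<subseteq> Hsp L"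
proof
  fix y assume "y \<in> opA L P t1 t2 t3 t4 ` domA L P t1 t2 t3 t4"
  then obtain w v where y: "y = opA L P t1 t2 t3 t4 (w, v, v L, v 0)"
    and w: "sob 3 L w" and v: "sob 2 L v" "extI L v"
    and bc_L: "flux' L P w L = - dI L w L" and bc_0: "flux' L P w 0 = Fb L t1 t2 t3 t4 w v"
    by (auto simp: domA_def)
  obtain p where p: "C1_deriv_on L (\<lambda>x. complex_of_real (P x)) p" "sob 1 L p"
    using P by (rule sob2_imp_C1_deriv)
  obtain a b where a: "C1_deriv_on L w a" "C1_deriv_on L a b" "sob 1 L b"
    and flux: "\<forall>x\<in>{0..L}. flux' L P w x = p x * a x + complex_of_real (P x) * b x"
    using flux'_sob3[OF L p(1) w] by blast
  define fl where "fl x = (if x \<in> {0..L} then flux' L P w x else 0)" for x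
  have "sob 1 L (\<lambda>x. p x * a x + b x * complex_of_real (P x))"
    using sob_one_mult_C1_deriv[OF p(2) a(2)] sob_one_mult_C1_deriv[OF a(3) p(1)] by (rule sob_add)
  then have "sob 1 L fl"
    by (rule sob_cong) (simp add: fl_def flux mult.commute)
  moreover have "extI L fl" "fl L = - dI L w L" "fl 0 = Fb L t1 t2 t3 t4 w v"
    using L bc_L bc_0 by (auto simp: fl_def extI_def)
  ultimately show "y \<in> Hsp L"
    using v by (simp add: y opA_def fl_def[abs_def] Hsp_def)
qed

lemma flux_primitive_exists:
  assumes L: "0 \<le> L" and P: "sob 2 L (\<lambda>x. complex_of_real (P x))"
    and P_nz: "\<forall>x\<in>{0..L}. P x \<noteq> 0" and g: "sob 1 L g"
  obtains H where "sob 2 L H" "C1_deriv_on L (\<lambda>x. complex_of_real (P x) * H x) g" "H L = - g L"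
proof -
  define PC where "PC x = complex_of_real (P x)" for x
  define K where "K x = - (g L * PC L) - integral {0..L} g + integral {0..x} g" for x
  have K: "primitive_on L K g"
    by (simp add: primitive_on_def K_def)
  have "continuous_on {0..L} g"
    using g sob_Suc_imp_continuous[of 0] by (simp only: One_nat_def)
  then have K': "C1_deriv_on L K g"
    using K by (rule C1_deriv_on_primitive)
  have "sob 2 L (\<lambda>x. K x / PC x)"
    using sob2_primitive_div[OF g K] P P_nz by (simp add: PC_def)
  moreover have "C1_deriv_on L (\<lambda>x. complex_of_real (P x) * (K x / PC x)) g"
    using K' by (rule C1_deriv_on_cong) (use P_nz in \<open>simp_all add: PC_def\<close>)
  moreover have "K L / PC L = - g L"
    using P_nz L by (simp add: K_def PC_def)
  ultimately show ?thesis
    using that by blast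
qed

lemma Hsp_subset_opA_image:
  assumes L: "0 < L" and P: "sob 2 L (\<lambda>x. complex_of_real (P x))"
    and P_nz: "\<forall>x\<in>{0..L}. P x \<noteq> 0" and t3: "t3 \<noteq> 0"
  shows "Hsp L \<subseteq> opA L P t1 t2 t3 t4 ` domA L P t1 t2 t3 t4"
proof
  fix y assume "y \<in> Hsp L"
  then obtain f g where y: "y = (f, g, g L, g 0)"
    and f: "sob 2 L f" "extI L f" and g: "sob 1 L g" "extI L g"
    by (auto simp: Hsp_def)
  obtain H where H: "sob 2 L H" and PH': "C1_deriv_on L (\<lambda>x. complex_of_real (P x) * H x) g"
    and H_L: "H L = - g L"
    using flux_primitive_exists[OF _ P P_nz g(1)] L by auto
  obtain H' where H': "C1_deriv_on L H H'"
    using H by (rule sob2_imp_C1_deriv)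
  have L_in: "L \<in> {0..L}" and O_in: "0 \<in> {0..L}"
    using L by auto
  define w0 where "w0 = (g 0 - of_real t1 * f 0 - of_real t2 * dI L f 0 - of_real t4 * H 0) / of_real t3"
  define w where "w x = (if x \<in> {0..L} then w0 + integral {0..x} H else 0)" for x
  have "primitive_on L w H"
    using O_in by (simp add: primitive_on_def w_def)
  then have w': "C1_deriv_on L w H"
    using C1_deriv_on_continuous[OF H'] by (intro C1_deriv_on_primitive)
  have w: "sob 3 L w"
    using C1_deriv_on_imp_sob_Suc[OF w' H] by (simp add: numeral_3_eq_3 numeral_2_eq_2)
  have flux: "flux' L P w x = g x" if "x \<in> {0..L}" for x
    using flux'_eq_C1_deriv[OF L w' PH' that] .
  have dw_L: "- dI L w L = g L"
    using dI_eq_C1_deriv[OF L w' L_in] H_L by simp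
  have Fb: "Fb L t1 t2 t3 t4 w f = g 0"
    using dI_eq_C1_deriv[OF L w' O_in] O_in t3 by (simp add: Fb_def w_def w0_def field_simps)
  have "(w, f, f L, f 0) \<in> domA L P t1 t2 t3 t4"
    using w f flux[OF L_in] flux[OF O_in] dw_L Fb by (simp add: domA_def w_def extI_def)
  moreover have "opA L P t1 t2 t3 t4 (w, f, f L, f 0) = y"
    using flux g(2) dw_L Fb by (auto simp: y opA_def extI_def)
  ultimately show "y \<in> opA L P t1 t2 t3 t4 ` domA L P t1 t2 t3 t4"
    by (metis image_eqI)
qed

theorem lemma2p6:
  fixes L P0 t1 t2 t3 t4 :: real and P :: "real \<Rightarrow> real"
  assumes "L > 0"
    and "sob 2 L (\<lambda>x. complex_of_real (P x))"
    and "P0 > 0" and "\<forall>x\<in>{0..L}. P x \<ge> P0"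
    and "t3 \<noteq> 0"
  shows "inj_on (opA L P t1 t2 t3 t4) (domA L P t1 t2 t3 t4) \<and>
         opA L P t1 t2 t3 t4 ` domA L P t1 t2 t3 t4 = Hsp L"
proof -
  have "\<forall>x\<in>{0..L}. P x \<noteq> 0"
    using assms(3,4) by force
  with assms show ?thesis
    using inj_on_opA opA_image_subset_Hsp Hsp_subset_opA_image by (metis subset_antisym)
qed

end
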